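(* The set-valued return function $V$ is a generalized contingent solution for (MOC).
   Context: Setting (MOC). Fix $T>0$, $I=[0,T]$, integers $n,m,p\ge1$, nonempty compact $U\subset\mathbb{R}^m$. $f:\mathbb{R}^n\times U\to\mathbb{R}^n$ continuous with $\|f(x_1,u)-f(x_2,u)\|\le K_f\|x_1-x_2\|$, $\|f(x,u)\|\le M_f$. $L:\mathbb{R}^n\times U\to\mathbb{R}^p$ continuous with $\|L(x,u)\|\le M_L$, $\|L(x_1,u)-L(x_2,u)\|\le K_L\|x_1-x_2\|$. Controls $\mathcal{U}$: bounded measurable $u:I\to U$. $x(s;t,x,u)$ solves $\dot x=f(x,u(s))$ on $[t,T]$, $x(t)=x$; $J(t,t',x,u)=\int_t^{t'}L(x(s;t,x,u),u(s))ds$; $Y(t,x)=\{J(t,T,x,u):u\in\mathcal{U}\}$. Euclidean norms. $P\subset\mathbb{R}^p$: closed convex pointed cone containing $0$ with nonempty interior; $\mathcal{E}(S,P)=\{y\in S:(y-P)\cap S=\{y\}\}$; $V(t,x)=\mathcal{E}(\mathrm{cl}\,Y(t,x),P)$; $W_\uparrow(t,x)=W(t,x)+P$. Extremal element map: for all $(t,x)$, $y\in W(t,x)$: $W(t,x)\cap(y-P)=\{y\}=W(t,x)\cap(y+P)$. $(\mathrm{FL})(x)=\mathrm{cl}\,\mathrm{co}\{(f(x,u),L(x,u)):u\in U\}$. Contingent cone $T_S(z)=\{v:\exists h_k\to0^+,\exists v_k\to v,z+h_kv_k\in S\}$; contingent derivative $DF(z,y)$ has graph $T_{\mathrm{gph}F}(z,y)$,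 value at $v$ written $DF((z,y);v)$. Generalized contingent solution: an extremal element map $W$ with (i) for all $(t,x)\in[0,T)\times\mathbb{R}^n$, $y\in W(t,x)$, some $(\bar f,\bar L)\in(\mathrm{FL})(x)$ satisfies $-\bar L\in DW_\uparrow((t,x,y);(1,\bar f))$; (ii) for all $(t,x)\in(0,T]\times\mathbb{R}^n$, $y\in W(t,x)$, $(f,L)\in(\mathrm{FL})(x)$: $L\in DW_\uparrow((t,x,y);(-1,-f))$; (iii) $W(T,x)=\{0\}$ for all $x$. *)

theory Defs
  imports "HOL-Analysis.Analysis"
begin

definition controls :: "real \<Rightarrow> ('m::euclidean_space) set \<Rightarrow> (real \<Rightarrow> 'm) set" where
  "controls T U = {u. (\<forall>s\<in>{0..T}. u s \<in> U) \<and> bounded (u ` {0..T})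
                      \<and> u \<in> borel_measurable (lebesgue_on {0..T})}"

text \<open>y is a (Caratheodory) solution of dx/ds = f(x,u(s)) on [t,T] with y(t) = x,
  written in integral form.\<close>
definition is_traj :: "real \<Rightarrow> ('n::euclidean_space \<Rightarrow> 'm \<Rightarrow> 'n) \<Rightarrow> real \<Rightarrow> 'n
      \<Rightarrow> (real \<Rightarrow> 'm) \<Rightarrow> (real \<Rightarrow> 'n) \<Rightarrow> bool" where
  "is_traj T f t x u y \<longleftrightarrow>
     (\<forall>s\<in>{t..T}. ((\<lambda>r. f (y r) (u r)) has_integral (y s - x)) {t..s})"

definition Yset :: "real \<Rightarrow> 'm set \<Rightarrow> ('n::euclidean_space \<Rightarrow> 'm::euclidean_space \<Rightarrow> 'n)
      \<Rightarrow> ('n \<Rightarrow> 'm \<Rightarrow> 'p::euclidean_space) \<Rightarrow> real \<Rightarrow> 'n \<Rightarrow> 'p set" where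
  "Yset T U f L t x = {j. \<exists>u\<in>controls T U. \<exists>y. is_traj T f t x u y
                          \<and> ((\<lambda>s. L (y s) (u s)) has_integral j) {t..T}}"

definition eff :: "'p::real_vector set \<Rightarrow> 'p set \<Rightarrow> 'p set" where
  "eff S P = {y \<in> S. ((\<lambda>q. y - q) ` P) \<inter> S = {y}}"

definition Vmap :: "real \<Rightarrow> 'm set \<Rightarrow> ('n::euclidean_space \<Rightarrow> 'm::euclidean_space \<Rightarrow> 'n)
      \<Rightarrow> ('n \<Rightarrow> 'm \<Rightarrow> 'p::euclidean_space) \<Rightarrow> 'p set \<Rightarrow> real \<Rightarrow> 'n \<Rightarrow> 'p set" where
  "Vmap T U f L P t x = eff (closure (Yset T U f L t x)) P"

definition upper :: "(real \<Rightarrow> 'n \<Rightarrow> 'p::real_vector set) \<Rightarrow> 'p set \<Rightarrow> real \<Rightarrow> 'n \<Rightarrow> 'p set" where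
  "upper W P t x = {w + q | w q. w \<in> W t x \<and> q \<in> P}"

definition contingent_cone :: "'a::real_normed_vector set \<Rightarrow> 'a \<Rightarrow> 'a set" where
  "contingent_cone S z = {v. \<exists>h vs. (\<forall>k. h k > 0) \<and> h \<longlonglongrightarrow> 0 \<and> vs \<longlonglongrightarrow> v
                                 \<and> (\<forall>k. z + h k *\<^sub>R vs k \<in> S)}"

definition graph_on :: "real \<Rightarrow> (real \<Rightarrow> 'n \<Rightarrow> 'p set) \<Rightarrow> ((real \<times> 'n) \<times> 'p) set" where
  "graph_on T W = {((t, x), y). t \<in> {0..T} \<and> y \<in> W t x}"

definition cont_deriv :: "real \<Rightarrow> (real \<Rightarrow> 'n::real_normed_vector \<Rightarrow> 'p::real_normed_vector set)
      \<Rightarrow> (real \<times> 'n) \<Rightarrow> 'p \<Rightarrow> (real \<times> 'n) \<Rightarrow> 'p set" where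
  "cont_deriv T W z y v = {w. (v, w) \<in> contingent_cone (graph_on T W) (z, y)}"

definition FL :: "'m set \<Rightarrow> ('n::euclidean_space \<Rightarrow> 'm \<Rightarrow> 'n)
      \<Rightarrow> ('n \<Rightarrow> 'm \<Rightarrow> 'p::euclidean_space) \<Rightarrow> 'n \<Rightarrow> ('n \<times> 'p) set" where
  "FL U f L x = closure (convex hull {(f x u, L x u) | u. u \<in> U})"

definition extremal_element_map :: "real \<Rightarrow> (real \<Rightarrow> 'n \<Rightarrow> 'p::real_vector set) \<Rightarrow> 'p set \<Rightarrow> bool" where
  "extremal_element_map T W P \<longleftrightarrow>
     (\<forall>t\<in>{0..T}. \<forall>x. \<forall>y\<in>W t x.
        W t x \<inter> ((\<lambda>q. y - q) ` P) = {y} \<and> W t x \<inter> ((\<lambda>q. y + q) ` P) = {y})"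

definition gen_contingent_solution :: "real \<Rightarrow> 'm set \<Rightarrow> ('n::euclidean_space \<Rightarrow> 'm \<Rightarrow> 'n)
      \<Rightarrow> ('n \<Rightarrow> 'm \<Rightarrow> 'p::euclidean_space) \<Rightarrow> 'p set \<Rightarrow> (real \<Rightarrow> 'n \<Rightarrow> 'p set) \<Rightarrow> bool" where
  "gen_contingent_solution T U f L P W \<longleftrightarrow>
     extremal_element_map T W P
   \<and> (\<forall>t\<in>{0..<T}. \<forall>x. \<forall>y\<in>W t x. \<exists>(fb, Lb)\<in>FL U f L x.
          - Lb \<in> cont_deriv T (upper W P) (t, x) y (1, fb))
   \<and> (\<forall>t\<in>{0<..T}. \<forall>x. \<forall>y\<in>W t x. \<forall>(fb, Lb)\<in>FL U f L x.
          Lb \<in> cont_deriv T (upper W P) (t, x) y (-1, - fb))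
   \<and> (\<forall>x. W T x = {0})"

end

theory Submission
  imports Defs
begin

text \<open>
  Every point of \<open>cl Y(t, x)\<close> dominates an efficient point (minimise a functional
  that is strictly positive on the pointed cone \<open>P\<close>), so \<open>cl Y(t, x)\<close> lies in the graph of
  \<open>V\<^sub>\<up> = V + P\<close>.  Contingent directions of that graph are then produced by explicit
  first-order constructions with errors \<open>O(h)\<close>:
  \<^item> forward (condition (i)): follow an admissible control for time \<open>h\<close>; the averaged velocity
    \<open>(\<Delta>x, \<Delta>J)/h\<close> is \<open>O(h)\<close>-close to the closed convex set \<open>FL(x)\<close>, and a compactness
    (selection) argument yields a limit direction \<open>(1, f\<^sub>b, -L\<^sub>b)\<close>;
  \<^item> backward (condition (ii)): for a convex combination of velocities, prepend arcs with the
    corresponding constant controls (obtained from a backward Picard iteration) of total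
    length \<open>h\<close>; density of the convex hull in \<open>FL(x)\<close> handles the closure.
\<close>

lemma lipschitz_constant_nonneg:
  fixes g :: "'a::euclidean_space \<Rightarrow> 'b::real_normed_vector"
  assumes "\<And>x1 x2. norm (g x1 - g x2) \<le> K * norm (x1 - x2)"
  shows "0 \<le> K"
proof -
  obtain b :: 'a where "b \<in> Basis" using nonempty_Basis by blast
  hence "norm (b - 0) = 1" by simp
  moreover have "0 \<le> K * norm (b - 0)"
    using assms[of b 0] norm_ge_zero[of "g b - g 0"] by linarith
  ultimately show ?thesis by simp
qed

lemma has_integral_bound_interval:
  fixes g :: "real \<Rightarrow> 'b::real_normed_vector"
  assumes "0 \<le> B" "(g has_integral i) {a..b}" "a \<le> b" "\<And>r. r \<in> {a..b} \<Longrightarrow> norm (g r) \<le> B"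
  shows "norm i \<le> B * (b - a)"
  using has_integral_bound_real[of B "{}" g i a b] assms by simp

lemma has_integral_near_constant:
  fixes g :: "real \<Rightarrow> 'b::real_normed_vector"
  assumes "(g has_integral i) {a..b}" "a \<le> b" "0 \<le> B" "\<And>r. r \<in> {a..b} \<Longrightarrow> norm (g r - c) \<le> B"
  shows "norm (i - (b - a) *\<^sub>R c) \<le> B * (b - a)"
proof (rule has_integral_bound_interval[OF assms(3) _ assms(2,4)])
  show "((\<lambda>r. g r - c) has_integral (i - (b - a) *\<^sub>R c)) {a..b}"
    using has_integral_diff[OF assms(1) has_integral_const_real[of c a b]] assms(2) by simp
qed

lemma has_integral_point: "((g::real \<Rightarrow> 'b::real_normed_vector) has_integral i) {c..c} \<Longrightarrow> i = 0"
  by (metis atLeastAtMost_singleton has_integral_refl(2) has_integral_unique)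

lemma has_integral_Pair:
  fixes F :: "real \<Rightarrow> 'a::real_normed_vector" and G :: "real \<Rightarrow> 'b::real_normed_vector"
  assumes "(F has_integral I1) S" "(G has_integral I2) S"
  shows "((\<lambda>r. (F r, G r)) has_integral (I1, I2)) S"
proof -
  have F: "((\<lambda>r. (F r, 0::'b)) has_integral (I1, 0)) S"
    using has_integral_linear[OF assms(1) bounded_linear_Pair[OF bounded_linear_ident bounded_linear_zero]]
    by (simp add: o_def)
  have G: "((\<lambda>r. (0::'a, G r)) has_integral (0, I2)) S"
    using has_integral_linear[OF assms(2) bounded_linear_Pair[OF bounded_linear_zero bounded_linear_ident]]
    by (simp add: o_def)
  show ?thesis using has_integral_add[OF F G] by simp
qed

subsection \<open>Short-time backward solutions of autonomous ODEs\<close>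

text \<open>The Picard operator for \<open>w' = g w\<close> with terminal value \<open>w b = x\<close>, acting on bounded
  continuous functions (the argument is clamped to \<open>[a, b]\<close>).\<close>
definition backward_picard ::
    "('a::euclidean_space \<Rightarrow> 'a) \<Rightarrow> 'a \<Rightarrow> real \<Rightarrow> real \<Rightarrow> (real \<Rightarrow>\<^sub>C 'a) \<Rightarrow> real \<Rightarrow> 'a" where
  "backward_picard g x a b \<phi> \<sigma> = x - integral {max a (min b \<sigma>)..b} (\<lambda>r. g (\<phi> r))"

context
  fixes g :: "'a::euclidean_space \<Rightarrow> 'a" and K M :: real
  assumes g_lipschitz: "K-lipschitz_on UNIV g" and g_bounded: "\<And>v. norm (g v) \<le> M"
begin

lemma picard_integrable: "(\<lambda>r. g (\<phi> r)) integrable_on {c..d}" for \<phi> :: "real \<Rightarrow>\<^sub>C 'a"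
  by (intro integrable_continuous_interval
      continuous_on_compose2[OF lipschitz_on_continuous_on[OF g_lipschitz]]) auto

lemma backward_picard_bcontfun:
  assumes "a \<le> b"
  shows "backward_picard g x a b \<phi> \<in> bcontfun"
proof (rule bcontfun_normI)
  have "continuous_on {a..b} (\<lambda>c. integral {c..b} (\<lambda>r. g (\<phi> r)))"
    by (rule indefinite_integral_continuous_1'[OF picard_integrable])
  moreover have "continuous_on UNIV (\<lambda>\<sigma>. max a (min b \<sigma>))" by (intro continuous_intros)
  ultimately have "continuous_on UNIV (\<lambda>\<sigma>. integral {max a (min b \<sigma>)..b} (\<lambda>r. g (\<phi> r)))"
    by (rule continuous_on_compose2) (use assms in auto)
  thus "continuous_on UNIV (backward_picard g x a b \<phi>)"
    unfolding backward_picard_def by (intro continuous_intros)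
  fix \<sigma>
  have M0: "0 \<le> M" using g_bounded[of 0] norm_ge_zero order_trans by blast
  have "norm (integral {max a (min b \<sigma>)..b} (\<lambda>r. g (\<phi> r))) \<le> M * (b - max a (min b \<sigma>))"
    using has_integral_bound_interval[OF M0 integrable_integral[OF picard_integrable]] g_bounded assms
    by auto
  also have "\<dots> \<le> M * (b - a)" using M0 by (intro mult_left_mono) auto
  finally have "norm (integral {max a (min b \<sigma>)..b} (\<lambda>r. g (\<phi> r))) \<le> M * (b - a)" .
  thus "norm (backward_picard g x a b \<phi> \<sigma>) \<le> norm x + M * (b - a)"
    unfolding backward_picard_def
    using norm_triangle_ineq4[of x "integral {max a (min b \<sigma>)..b} (\<lambda>r. g (\<phi> r))"] by linarith
qed

lemma backward_picard_contraction:
  assumes "a \<le> b"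
  shows "dist (Bcontfun (backward_picard g x a b \<phi>)) (Bcontfun (backward_picard g x a b \<psi>))
           \<le> ((b - a) * K) * dist \<phi> \<psi>"
proof (rule dist_bound)
  fix \<sigma>
  define c where "c = max a (min b \<sigma>)"
  have c: "a \<le> c" "c \<le> b" using assms by (auto simp: c_def)
  have K0: "0 \<le> K" using lipschitz_on_nonneg[OF g_lipschitz] .
  have diff: "((\<lambda>r. g (\<phi> r) - g (\<psi> r)) has_integral
      (integral {c..b} (\<lambda>r. g (\<phi> r)) - integral {c..b} (\<lambda>r. g (\<psi> r)))) {c..b}"
    by (intro has_integral_diff integrable_integral picard_integrable)
  have bound: "norm (g (\<phi> r) - g (\<psi> r)) \<le> K * dist \<phi> \<psi>" for r
  proof -
    have "norm (g (\<phi> r) - g (\<psi> r)) \<le> K * dist (\<phi> r) (\<psi> r)"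
      using lipschitz_on_normD[OF g_lipschitz, of "\<phi> r" "\<psi> r"] by (simp add: dist_norm)
    also have "\<dots> \<le> K * dist \<phi> \<psi>" by (rule mult_left_mono[OF dist_bounded K0])
    finally show ?thesis .
  qed
  have "dist (Bcontfun (backward_picard g x a b \<phi>) \<sigma>) (Bcontfun (backward_picard g x a b \<psi>) \<sigma>)
      = norm (integral {c..b} (\<lambda>r. g (\<phi> r)) - integral {c..b} (\<lambda>r. g (\<psi> r)))"
    using Bcontfun_inverse[OF backward_picard_bcontfun[OF assms]]
    by (simp add: backward_picard_def dist_norm c_def norm_minus_commute)
  also have "\<dots> \<le> (K * dist \<phi> \<psi>) * (b - c)"
    using has_integral_bound_interval[OF _ diff c(2) bound] K0 by simp
  also have "\<dots> \<le> (K * dist \<phi> \<psi>) * (b - a)" using c K0 by (intro mult_left_mono) auto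
  finally show "dist (Bcontfun (backward_picard g x a b \<phi>) \<sigma>) (Bcontfun (backward_picard g x a b \<psi>) \<sigma>)
      \<le> ((b - a) * K) * dist \<phi> \<psi>"
    by (simp add: algebra_simps)
qed

text \<open>Short-time backward solvability of \<open>w' = g w\<close>, \<open>w b = x\<close>, in integral form: the Picard
  operator is a contraction on bounded continuous functions when \<open>(b - a) K < 1\<close>.\<close>
lemma backward_ode:
  assumes ab: "a \<le> b" and small: "(b - a) * K < 1"
  shows "\<exists>w. continuous_on {a..b} w \<and>
             (\<forall>\<sigma>\<in>{a..b}. ((\<lambda>r. g (w r)) has_integral (x - w \<sigma>)) {\<sigma>..b})"
proof -
  have K0: "0 \<le> (b - a) * K" using ab lipschitz_on_nonneg[OF g_lipschitz] by simp
  obtain w where fixpoint: "Bcontfun (backward_picard g x a b w) = w"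
    using banach_fix_type[OF K0 small, of "\<lambda>\<phi>. Bcontfun (backward_picard g x a b \<phi>)"]
      backward_picard_contraction[OF ab] by blast
  have "apply_bcontfun (Bcontfun (backward_picard g x a b w)) = backward_picard g x a b w"
    by (rule Bcontfun_inverse[OF backward_picard_bcontfun[OF ab]])
  hence w_eq: "apply_bcontfun w = backward_picard g x a b w" unfolding fixpoint .
  have "((\<lambda>r. g (w r)) has_integral (x - w \<sigma>)) {\<sigma>..b}" if "\<sigma> \<in> {a..b}" for \<sigma>
  proof -
    have "w \<sigma> = backward_picard g x a b w \<sigma>" by (rule fun_cong[OF w_eq])
    also have "\<dots> = x - integral {\<sigma>..b} (\<lambda>r. g (w r))"
      using that by (simp add: backward_picard_def)
    finally show ?thesis using integrable_integral[OF picard_integrable] by simp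
  qed
  thus ?thesis by (intro exI[of _ "apply_bcontfun w"]) auto
qed

end

text \<open>The mean value of a function over an interval is within \<open>e\<close> of a closed convex set
  if every value is: project the mean onto the set and test against the normal direction.\<close>
lemma integral_mean_near_convex:
  fixes g :: "real \<Rightarrow> 'a::euclidean_space"
  assumes gi: "(g has_integral I) {a..b}" and ab: "a < b" and cK: "closed K" and vK: "convex K"
    and near: "\<And>r. r \<in> {a..b} \<Longrightarrow> \<exists>k\<in>K. norm (g r - k) \<le> e"
  shows "\<exists>k\<in>K. norm ((1 / (b - a)) *\<^sub>R I - k) \<le> e"
proof -
  obtain k1 where k1: "k1 \<in> K" "norm (g a - k1) \<le> e" using near[of a] ab by auto
  hence e0: "0 \<le> e" using norm_ge_zero order_trans by blast
  define c where "c = (1 / (b - a)) *\<^sub>R I"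
  define k0 where "k0 = closest_point K c"
  define \<nu> where "\<nu> = c - k0"
  have k0K: "k0 \<in> K" unfolding k0_def using closest_point_in_set[OF cK] k1(1) by blast
  have pointwise: "inner \<nu> (g r) \<le> inner \<nu> k0 + norm \<nu> * e" if r: "r \<in> {a..b}" for r
  proof -
    obtain k where k: "k \<in> K" "norm (g r - k) \<le> e" using near[OF r] by blast
    have "inner \<nu> (k - k0) \<le> 0"
      unfolding \<nu>_def k0_def by (rule closest_point_dot[OF vK cK k(1)])
    moreover have "inner \<nu> (g r - k) \<le> norm \<nu> * e"
      using norm_cauchy_schwarz[of \<nu> "g r - k"] k(2) mult_left_mono[OF k(2) norm_ge_zero[of \<nu>]]
      by linarith
    ultimately show ?thesis by (simp add: inner_diff_right)
  qed
  have "((\<lambda>r. inner \<nu> (g r)) has_integral inner \<nu> I) {a..b}"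
    using has_integral_linear[OF gi bounded_linear_inner_right[of \<nu>]] by (simp add: o_def)
  hence "inner \<nu> I \<le> (b - a) * (inner \<nu> k0 + norm \<nu> * e)"
    using has_integral_le[OF _ has_integral_const_real[of "inner \<nu> k0 + norm \<nu> * e" a b] pointwise] ab
    by simp
  hence "inner \<nu> c \<le> inner \<nu> k0 + norm \<nu> * e"
    using ab by (simp add: c_def inner_scaleR_right pos_divide_le_eq mult.commute)
  hence "inner \<nu> \<nu> \<le> norm \<nu> * e" unfolding \<nu>_def by (simp add: inner_diff_right algebra_simps)
  hence sq: "norm \<nu> * norm \<nu> \<le> norm \<nu> * e"
    by (simp add: power2_eq_square[symmetric] power2_norm_eq_inner[symmetric])
  have "norm \<nu> \<le> e"
  proof (cases "\<nu> = 0")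
    case False
    thus ?thesis using mult_le_cancel_left_pos[of "norm \<nu>" "norm \<nu>" e] sq by simp
  qed (use e0 in simp)
  thus ?thesis using k0K unfolding \<nu>_def c_def by blast
qed

lemma contingent_cone_selection:
  fixes \<phi> :: "'k::metric_space \<Rightarrow> 'a::real_normed_vector"
  assumes K: "compact K" and \<phi>: "continuous_on K \<phi>" and \<delta>: "0 < \<delta>"
    and near: "\<And>h. 0 < h \<Longrightarrow> h \<le> \<delta> \<Longrightarrow> \<exists>k\<in>K. \<exists>v. norm (v - \<phi> k) \<le> C * h \<and> z + h *\<^sub>R v \<in> S"
  shows "\<exists>k\<in>K. \<phi> k \<in> contingent_cone S z"
proof -
  define h where "h n = \<delta> * inverse (real (Suc n))" for n
  have h_pos: "0 < h n" and h_le: "h n \<le> \<delta>" for n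
    using \<delta> by (auto simp: h_def field_simps)
  have h_lim: "h \<longlonglongrightarrow> 0"
    unfolding h_def by (rule tendsto_mult_right_zero[OF LIMSEQ_inverse_real_of_nat])
  have "\<forall>n. \<exists>k v. k \<in> K \<and> norm (v - \<phi> k) \<le> C * h n \<and> z + h n *\<^sub>R v \<in> S"
    using near[OF h_pos h_le] by blast
  then obtain ks vs where sel: "\<forall>n. ks n \<in> K \<and> norm (vs n - \<phi> (ks n)) \<le> C * h n
                                    \<and> z + h n *\<^sub>R vs n \<in> S"
    unfolding choice_iff by blast
  hence ks: "\<And>n. ks n \<in> K"
    and vs: "\<And>n. norm (vs n - \<phi> (ks n)) \<le> C * h n" "\<And>n. z + h n *\<^sub>R vs n \<in> S"
    by auto
  have "\<exists>k0\<in>K. \<exists>r. strict_mono r \<and> (ks \<circ> r) \<longlonglongrightarrow> k0"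
    using K ks unfolding compact_def by blast
  then obtain k0 r where k0: "k0 \<in> K" and r: "strict_mono r" and conv: "(ks \<circ> r) \<longlonglongrightarrow> k0"
    by blast
  have hr_lim: "(h \<circ> r) \<longlonglongrightarrow> 0" using LIMSEQ_subseq_LIMSEQ[OF h_lim r] .
  have "(\<lambda>n. \<phi> (ks (r n))) \<longlonglongrightarrow> \<phi> k0"
    using continuous_on_tendsto_compose[OF \<phi> conv k0] ks by (simp add: o_def)
  moreover have "(\<lambda>n. vs (r n) - \<phi> (ks (r n))) \<longlonglongrightarrow> 0"
  proof (rule Lim_null_comparison[OF always_eventually])
    show "\<forall>n. norm (vs (r n) - \<phi> (ks (r n))) \<le> C * h (r n)" using vs(1) by blast
    show "(\<lambda>n. C * h (r n)) \<longlonglongrightarrow> 0"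
      using tendsto_mult_right_zero[OF hr_lim, of C] by (simp add: o_def)
  qed
  ultimately have "(\<lambda>n. (vs (r n) - \<phi> (ks (r n))) + \<phi> (ks (r n))) \<longlonglongrightarrow> 0 + \<phi> k0"
    by (intro tendsto_add)
  hence "(vs \<circ> r) \<longlonglongrightarrow> \<phi> k0" by (simp add: o_def)
  hence "\<phi> k0 \<in> contingent_cone S z"
    unfolding contingent_cone_def mem_Collect_eq
    by (intro exI[of _ "h \<circ> r"] exI[of _ "vs \<circ> r"] conjI allI)
       (use h_pos vs(2) hr_lim in \<open>simp_all add: o_def\<close>)
  thus ?thesis using k0 by blast
qed

corollary contingent_coneI_rate:
  fixes v :: "'a::real_normed_vector"
  assumes "0 < \<delta>" "\<And>h. 0 < h \<Longrightarrow> h \<le> \<delta> \<Longrightarrow> \<exists>w. norm (w - v) \<le> C * h \<and> z + h *\<^sub>R w \<in> S"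
  shows "v \<in> contingent_cone S z"
  using contingent_cone_selection[of "{v}" "\<lambda>k. k" \<delta> C z S] assms by simp

subsection \<open>Pointed convex cones\<close>

lemma cone_add: "convex P \<Longrightarrow> cone P \<Longrightarrow> p \<in> P \<Longrightarrow> q \<in> P \<Longrightarrow> p + q \<in> P"
  using convex_cone by blast

lemma convex_cone_nonneg_combination:
  assumes "convex P" "cone P" "0 \<in> P" "finite F" "F \<subseteq> P" "\<And>v. v \<in> F \<Longrightarrow> 0 \<le> w v"
  shows "(\<Sum>v\<in>F. w v *\<^sub>R v) \<in> P"
  using assms(4-6)
proof (induction F rule: finite_induct)
  case (insert a F)
  have "w a *\<^sub>R a \<in> P" using insert assms(2) by (simp add: cone_def)
  thus ?case using insert cone_add[OF assms(1,2)] by simp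
qed (use assms in simp)

text \<open>A closed pointed convex cone admits a linear functional that is strictly positive on
  its nonzero elements: separate \<open>0\<close> from the convex hull of the cone's unit sphere.\<close>
lemma pointed_cone_positive_functional:
  fixes P :: "'p::euclidean_space set"
  assumes cl: "closed P" and cv: "convex P" and cn: "cone P" and P0: "0 \<in> P"
    and pt: "P \<inter> uminus ` P = {0}"
  obtains a where "\<And>q. q \<in> P \<Longrightarrow> q \<noteq> 0 \<Longrightarrow> inner a q > 0"
proof -
  define K where "K = convex hull (P \<inter> sphere 0 1)"
  have "0 \<notin> K"
  proof
    assume "0 \<in> K"
    then obtain F w where F: "finite F" "F \<subseteq> P \<inter> sphere 0 1" "\<forall>v\<in>F. 0 \<le> w v" "sum w F = 1"
      "(\<Sum>v\<in>F. w v *\<^sub>R v) = 0"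
      unfolding K_def convex_hull_explicit by blast
    have "\<exists>v0\<in>F. w v0 \<noteq> 0" using F(4) by (metis sum.neutral zero_neq_one)
    then obtain v0 where v0: "v0 \<in> F" "w v0 \<noteq> 0" by blast
    have rest: "(\<Sum>v\<in>F - {v0}. w v *\<^sub>R v) \<in> P"
      by (rule convex_cone_nonneg_combination[OF cv cn P0]) (use F in auto)
    have "w v0 *\<^sub>R v0 = - (\<Sum>v\<in>F - {v0}. w v *\<^sub>R v)"
      using F(1,5) v0(1) by (simp add: sum.remove eq_neg_iff_add_eq_0)
    moreover have "w v0 *\<^sub>R v0 \<in> P" using v0 F cn by (auto simp: cone_def)
    ultimately have "w v0 *\<^sub>R v0 = 0" using rest pt by (metis IntI imageI singletonD)
    thus False using v0 F(2) by auto
  qed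
  moreover have "compact K" unfolding K_def
    by (intro compact_convex_hull closed_Int_compact cl compact_sphere)
  ultimately obtain a b where ab: "0 < b" "\<And>k. k \<in> K \<Longrightarrow> inner a k > b"
    using separating_hyperplane_closed_0[of K] compact_imp_closed unfolding K_def
    by (metis convex_convex_hull)
  show ?thesis
  proof
    fix q assume q: "q \<in> P" "q \<noteq> 0"
    hence "(1 / norm q) *\<^sub>R q \<in> K" using cn unfolding K_def by (intro hull_inc) (auto simp: cone_def)
    hence "inner a ((1 / norm q) *\<^sub>R q) > 0" using ab by force
    thus "inner a q > 0" using q by (simp add: zero_less_divide_iff)
  qed
qed

text \<open>Domination property: every point of a compact set dominates (w.r.t. the order of a
  closed pointed convex cone) an efficient point; obtained by minimising a strictly positive
  functional over the points below it.\<close>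
lemma efficient_point_below:
  fixes P :: "'p::euclidean_space set"
  assumes cl: "closed P" and cv: "convex P" and cn: "cone P" and P0: "0 \<in> P"
    and pt: "P \<inter> uminus ` P = {0}" and S: "compact S" and z: "z \<in> S"
  obtains m where "m \<in> eff S P" "z - m \<in> P"
proof -
  obtain a where a: "\<And>q. q \<in> P \<Longrightarrow> q \<noteq> 0 \<Longrightarrow> inner a q > 0"
    using pointed_cone_positive_functional[OF cl cv cn P0 pt] by blast
  define S' where "S' = S \<inter> (\<lambda>y. z - y) -` P"
  have "closed ((\<lambda>y. z - y) -` P)"
    by (rule continuous_closed_vimage[OF cl]) (intro continuous_intros)
  hence "compact S'" unfolding S'_def using S compact_Int_closed by blast
  moreover have "z \<in> S'" using z P0 by (auto simp: S'_def)
  ultimately have "\<exists>m\<in>S'. \<forall>y\<in>S'. inner a m \<le> inner a y"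
    by (intro continuous_attains_inf continuous_intros) auto
  then obtain m where m: "m \<in> S'" and m_min: "\<And>y. y \<in> S' \<Longrightarrow> inner a m \<le> inner a y"
    by blast
  have "(\<lambda>q. m - q) ` P \<inter> S \<subseteq> {m}"
  proof
    fix y assume "y \<in> (\<lambda>q. m - q) ` P \<inter> S"
    then obtain q where q: "q \<in> P" "y = m - q" "y \<in> S" by auto
    have "z - y = (z - m) + q" using q(2) by simp
    also have "\<dots> \<in> P" using m q(1) cone_add[OF cv cn] by (simp add: S'_def)
    finally have "y \<in> S'" using q(3) unfolding S'_def by blast
    hence "inner a q \<le> 0" using m_min q(2) by (fastforce simp: inner_diff_right)
    hence "q = 0" using a[OF q(1)] by force
    thus "y \<in> {m}" using q by simp
  qed
  moreover have "m \<in> (\<lambda>q. m - q) ` P \<inter> S" using m P0 by (auto simp: S'_def image_iff)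
  ultimately have "m \<in> eff S P" unfolding eff_def using m by (auto simp: S'_def)
  thus ?thesis using that m by (simp add: S'_def)
qed

lemma controls_in_U: "u \<in> controls T U \<Longrightarrow> r \<in> {0..T} \<Longrightarrow> u r \<in> U"
  by (auto simp: controls_def)

text \<open>Error bookkeeping for two consecutive first-order steps: errors \<open>C \<sigma>\<^sup>2\<close> and \<open>C s\<^sup>2\<close>,
  plus the drift \<open>C \<sigma>\<close> of the second step's base point, add up to at most \<open>C (\<sigma> + s)\<^sup>2\<close>.\<close>
lemma two_step_error:
  fixes a1 a2 S b0 b1 :: "'a::real_normed_vector"
  assumes e1: "norm (a1 - S) \<le> C * \<sigma>\<^sup>2" and e2: "norm (a2 - s *\<^sub>R b1) \<le> C * s\<^sup>2"
    and drift: "norm (b1 - b0) \<le> C * \<sigma>" and nonneg: "0 \<le> s" "0 \<le> \<sigma>" "0 \<le> C"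
  shows "norm ((a1 + a2) - (S + s *\<^sub>R b0)) \<le> C * (\<sigma> + s)\<^sup>2"
proof -
  have eq: "(a1 + a2) - (S + s *\<^sub>R b0) = (a1 - S) + (a2 - s *\<^sub>R b1) + s *\<^sub>R (b1 - b0)"
    by (simp add: algebra_simps)
  have "norm (s *\<^sub>R (b1 - b0)) = s * norm (b1 - b0)" using nonneg(1) by simp
  hence "norm ((a1 + a2) - (S + s *\<^sub>R b0)) \<le> norm (a1 - S) + norm (a2 - s *\<^sub>R b1) + s * norm (b1 - b0)"
    unfolding eq using norm_triangle_ineq[of "(a1 - S) + (a2 - s *\<^sub>R b1)" "s *\<^sub>R (b1 - b0)"]
      norm_triangle_ineq[of "a1 - S" "a2 - s *\<^sub>R b1"] by linarith
  also have "\<dots> \<le> C * \<sigma>\<^sup>2 + C * s\<^sup>2 + s * (C * \<sigma>)"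
    using e1 e2 mult_left_mono[OF drift nonneg(1)] by linarith
  also have "\<dots> \<le> C * (\<sigma> + s)\<^sup>2"
    using nonneg by (simp add: power2_eq_square algebra_simps)
  finally show ?thesis .
qed

lemma norm_direction_diff:
  fixes a c :: "'a::real_normed_vector" and b d :: "'b::real_normed_vector"
  shows "norm (((s::real, a), b) - ((s, c), d)) \<le> norm (a - c) + norm (b - d)"
proof -
  have "norm (((s, a), b) - ((s, c), d)) \<le> norm (0::real, a - c) + norm (b - d)"
    using norm_Pair_le[of "(0::real, a - c)" "b - d"] by simp
  also have "norm (0::real, a - c) = norm (a - c)" by (simp add: norm_Pair)
  finally show ?thesis .
qed

lemma convex_hull_image_explicit:
  assumes "c \<in> convex hull (g ` A)"
  obtains S \<mu> where "finite S" "S \<subseteq> A" "\<And>u. u \<in> S \<Longrightarrow> 0 \<le> \<mu> u" "sum \<mu> S = 1"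
    "(\<Sum>u\<in>S. \<mu> u *\<^sub>R g u) = c"
proof -
  obtain F w where F: "finite F" "F \<subseteq> g ` A" "\<forall>v\<in>F. 0 \<le> w v" "sum w F = 1"
    "(\<Sum>v\<in>F. w v *\<^sub>R v) = c"
    using assms unfolding convex_hull_explicit by blast
  obtain S where S: "S \<subseteq> A" "inj_on g S" "F = g ` S" using F(2) subset_image_inj by metis
  have "finite S" using F(1) S(2,3) finite_image_iff by blast
  moreover have "sum (w \<circ> g) S = 1" "(\<Sum>u\<in>S. (w \<circ> g) u *\<^sub>R g u) = c"
    using F(4,5) sum.reindex[OF S(2), of w] sum.reindex[OF S(2), of "\<lambda>v. w v *\<^sub>R v"] S(3)
    by (simp_all add: o_def)
  ultimately show ?thesis using that[of S "w \<circ> g"] F(3) S by auto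
qed

lemma controls_prepend:
  assumes u: "u \<in> controls T U" and u0: "u0 \<in> U"
  shows "(\<lambda>r. if r \<in> {a..<t} then u0 else u r) \<in> controls T U"
proof -
  have "(\<lambda>r. if r \<in> {a..<t} then u0 else u r) ` {0..T} \<subseteq> insert u0 (u ` {0..T})" by auto
  moreover have "bounded (insert u0 (u ` {0..T}))" using u by (simp add: controls_def bounded_insert)
  ultimately have "bounded ((\<lambda>r. if r \<in> {a..<t} then u0 else u r) ` {0..T})"
    using bounded_subset by blast
  moreover have "{a..<t} \<inter> space (lebesgue_on {0..T}) \<in> sets (lebesgue_on {0..T})"
    by (auto simp: sets_restrict_space space_restrict_space intro!: image_eqI[where x="{a..<t}"])
  hence "(\<lambda>r. if r \<in> {a..<t} then u0 else u r) \<in> borel_measurable (lebesgue_on {0..T})"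
    using u by (intro measurable_If_set) (auto simp: controls_def)
  ultimately show ?thesis using u u0 by (auto simp: controls_def)
qed

text \<open>Standing hypotheses of (MOC): dynamics and running cost are bounded and uniformly
  Lipschitz in the state.\<close>
locale moc =
  fixes T :: real and U :: "'m::euclidean_space set"
    and f :: "'n::euclidean_space \<Rightarrow> 'm \<Rightarrow> 'n"
    and L :: "'n \<Rightarrow> 'm \<Rightarrow> 'p::euclidean_space"
    and Kf Mf KL BL :: real
  assumes U_nonempty: "U \<noteq> {}"
    and f_lip: "\<And>x1 x2 u. u \<in> U \<Longrightarrow> norm (f x1 u - f x2 u) \<le> Kf * norm (x1 - x2)"
    and f_bound: "\<And>x u. u \<in> U \<Longrightarrow> norm (f x u) \<le> Mf"
    and L_bound: "\<And>x u. u \<in> U \<Longrightarrow> norm (L x u) \<le> BL"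
    and L_lip: "\<And>x1 x2 u. u \<in> U \<Longrightarrow> norm (L x1 u - L x2 u) \<le> KL * norm (x1 - x2)"
begin

abbreviation "Y \<equiv> Yset T U f L"

lemma constants_nonneg: "0 \<le> Kf" "0 \<le> KL" "0 \<le> Mf" "0 \<le> BL"
proof -
  obtain u where u: "u \<in> U" using U_nonempty by blast
  show "0 \<le> Kf" by (rule lipschitz_constant_nonneg[OF f_lip[OF u]])
  show "0 \<le> KL" by (rule lipschitz_constant_nonneg[OF L_lip[OF u]])
  show "0 \<le> Mf" using f_bound[OF u, of 0] norm_ge_zero order_trans by blast
  show "0 \<le> BL" using L_bound[OF u, of 0] norm_ge_zero order_trans by blast
qed

lemma f_lipschitz_on: "u \<in> U \<Longrightarrow> Kf-lipschitz_on UNIV (\<lambda>v. f v u)"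
  using f_lip constants_nonneg by (intro lipschitz_onI) (auto simp: dist_norm)

lemma L_continuous_on: "u \<in> U \<Longrightarrow> continuous_on S (\<lambda>v. L v u)"
  using L_lip constants_nonneg
  by (intro lipschitz_on_continuous_on[of KL] lipschitz_onI) (auto simp: dist_norm)

lemma FL_mem: "u \<in> U \<Longrightarrow> (f x u, L x u) \<in> FL U f L x"
  unfolding FL_def by (rule closure_subset[THEN subsetD], rule hull_inc) blast

lemma FL_convex: "convex (FL U f L x)"
  unfolding FL_def by (simp add: convex_closure)

lemma FL_compact: "compact (FL U f L x)"
proof -
  have "{(f x u, L x u) | u. u \<in> U} \<subseteq> cball 0 (Mf + BL)"
    using f_bound L_bound norm_Pair_le by (fastforce intro: order_trans add_mono)
  hence "convex hull {(f x u, L x u) | u. u \<in> U} \<subseteq> cball 0 (Mf + BL)"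
    by (intro hull_minimal) auto
  hence "bounded (FL U f L x)" unfolding FL_def by (meson bounded_cball bounded_closure bounded_subset)
  thus ?thesis unfolding FL_def by (simp add: compact_eq_bounded_closed)
qed

lemma traj_displacement:
  assumes "is_traj T f t x u z" "u \<in> controls T U" "0 \<le> t" "r \<in> {t..T}"
  shows "norm (z r - x) \<le> Mf * (r - t)"
proof (rule has_integral_bound_interval[OF constants_nonneg(3)])
  show "((\<lambda>q. f (z q) (u q)) has_integral (z r - x)) {t..r}"
    using assms(1,4) by (auto simp: is_traj_def)
  show "norm (f (z q) (u q)) \<le> Mf" if "q \<in> {t..r}" for q
    using that assms controls_in_U[of u T U q] f_bound by auto
qed (use assms in auto)

lemma Y_bound:
  assumes "0 \<le> t" "t \<le> T" "J \<in> Y t x" shows "norm J \<le> BL * (T - t)"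
proof -
  obtain u z where u: "u \<in> controls T U" and J: "((\<lambda>r. L (z r) (u r)) has_integral J) {t..T}"
    using assms(3) unfolding Yset_def by blast
  show ?thesis
    using has_integral_bound_interval[OF constants_nonneg(4) J assms(2)]
      controls_in_U[OF u] L_bound assms(1) by auto
qed

lemma Y_closure_compact: "0 \<le> t \<Longrightarrow> t \<le> T \<Longrightarrow> compact (closure (Y t x))"
  using Y_bound by (auto simp: compact_closure bounded_iff)

lemma Y_final: "Y T x = {0}"
proof
  show "Y T x \<subseteq> {0}" unfolding Yset_def using has_integral_point by blast
  obtain u0 where u0: "u0 \<in> U" using U_nonempty by blast
  have "(\<lambda>_. u0) \<in> controls T U" using u0 by (auto simp: controls_def image_constant_conv)
  moreover have "is_traj T f T x (\<lambda>_. u0) (\<lambda>_. x)" unfolding is_traj_def by auto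
  moreover have "((\<lambda>r. L x u0) has_integral 0) {T..T}" by auto
  ultimately show "{0} \<subseteq> Y T x" unfolding Yset_def by blast
qed

subsection \<open>Forward step: the dynamic programming principle\<close>

lemma traj_restrict:
  assumes z: "is_traj T f t x u z" and ts: "t \<le> s" "s \<le> T"
  shows "is_traj T f s (z s) u z"
  unfolding is_traj_def
proof
  fix \<sigma> assume \<sigma>: "\<sigma> \<in> {s..T}"
  have whole: "((\<lambda>r. f (z r) (u r)) has_integral (z \<sigma> - x)) {t..\<sigma>}"
    and first: "((\<lambda>r. f (z r) (u r)) has_integral (z s - x)) {t..s}"
    using z \<sigma> ts by (auto simp: is_traj_def)
  have "(\<lambda>r. f (z r) (u r)) integrable_on {s..\<sigma>}"
    using \<sigma> ts by (intro integrable_subinterval_real[OF has_integral_integrable[OF whole]]) auto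
  hence second: "((\<lambda>r. f (z r) (u r)) has_integral integral {s..\<sigma>} (\<lambda>r. f (z r) (u r))) {s..\<sigma>}"
    by (rule integrable_integral)
  have "z s - x + integral {s..\<sigma>} (\<lambda>r. f (z r) (u r)) = z \<sigma> - x"
    using has_integral_unique[OF has_integral_combine[OF _ _ first second] whole] ts \<sigma> by auto
  hence "integral {s..\<sigma>} (\<lambda>r. f (z r) (u r)) = z \<sigma> - z s" by (simp add: algebra_simps)
  thus "((\<lambda>r. f (z r) (u r)) has_integral (z \<sigma> - z s)) {s..\<sigma>}" using second by simp
qed

lemma Y_split:
  assumes u: "u \<in> controls T U" and z: "is_traj T f t x u z"
    and J: "((\<lambda>r. L (z r) (u r)) has_integral J) {t..T}" and ts: "t \<le> s" "s \<le> T"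
  obtains I where "((\<lambda>r. L (z r) (u r)) has_integral I) {t..s}" "J - I \<in> Y s (z s)"
proof -
  have int: "(\<lambda>r. L (z r) (u r)) integrable_on {a..b}" if "t \<le> a" "b \<le> T" for a b
    using that by (intro integrable_subinterval_real[OF has_integral_integrable[OF J]]) auto
  define I where "I = integral {t..s} (\<lambda>r. L (z r) (u r))"
  have I: "((\<lambda>r. L (z r) (u r)) has_integral I) {t..s}"
    unfolding I_def using int ts by (intro integrable_integral) auto
  have rest: "((\<lambda>r. L (z r) (u r)) has_integral integral {s..T} (\<lambda>r. L (z r) (u r))) {s..T}"
    using int ts by (intro integrable_integral) auto
  have "I + integral {s..T} (\<lambda>r. L (z r) (u r)) = J"
    using has_integral_unique[OF has_integral_combine[OF ts I rest] J] .
  hence "integral {s..T} (\<lambda>r. L (z r) (u r)) = J - I" by (metis add_diff_cancel_left')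
  hence "((\<lambda>r. L (z r) (u r)) has_integral (J - I)) {s..T}" using rest by simp
  hence "J - I \<in> Y s (z s)" unfolding Yset_def using u traj_restrict[OF z ts] by blast
  thus ?thesis using that I by blast
qed

lemma forward_step:
  assumes J: "J \<in> Y t x" and t: "0 \<le> t" and h: "0 < h" "t + h \<le> T"
  obtains x' J' \<kappa> where "J' \<in> Y (t + h) x'" "\<kappa> \<in> FL U f L x"
    "norm ((1 / h) *\<^sub>R (x' - x, J - J') - \<kappa>) \<le> (Kf + KL) * Mf * h"
proof -
  obtain u z where u: "u \<in> controls T U" and z: "is_traj T f t x u z"
    and cost: "((\<lambda>r. L (z r) (u r)) has_integral J) {t..T}"
    using J unfolding Yset_def by blast
  have ts: "t \<le> t + h" "t + h \<le> T" using h by auto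
  obtain I where I: "((\<lambda>r. L (z r) (u r)) has_integral I) {t..t + h}"
    and rest: "J - I \<in> Y (t + h) (z (t + h))"
    using Y_split[OF u z cost ts] .
  have "((\<lambda>r. f (z r) (u r)) has_integral (z (t + h) - x)) {t..t + h}"
    using z ts by (auto simp: is_traj_def)
  hence velocity: "((\<lambda>r. (f (z r) (u r), L (z r) (u r))) has_integral (z (t + h) - x, I)) {t..t + h}"
    using has_integral_Pair I by blast
  have near: "\<exists>\<kappa>\<in>FL U f L x. norm ((f (z r) (u r), L (z r) (u r)) - \<kappa>) \<le> (Kf + KL) * Mf * h"
    if r: "r \<in> {t..t + h}" for r
  proof
    have uU: "u r \<in> U" using controls_in_U[OF u] r t ts by auto
    show "(f x (u r), L x (u r)) \<in> FL U f L x" by (rule FL_mem[OF uU])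
    have zr: "norm (z r - x) \<le> Mf * h"
      using traj_displacement[OF z u t, of r] r ts constants_nonneg(3)
      by (smt (verit) atLeastAtMost_iff mult_left_mono)
    have "norm ((f (z r) (u r), L (z r) (u r)) - (f x (u r), L x (u r)))
        \<le> norm (f (z r) (u r) - f x (u r)) + norm (L (z r) (u r) - L x (u r))"
      using norm_Pair_le by simp
    also have "\<dots> \<le> Kf * norm (z r - x) + KL * norm (z r - x)"
      using f_lip[OF uU] L_lip[OF uU] by (intro add_mono)
    also have "\<dots> \<le> Kf * (Mf * h) + KL * (Mf * h)"
      using zr constants_nonneg by (intro add_mono mult_left_mono) auto
    finally show "norm ((f (z r) (u r), L (z r) (u r)) - (f x (u r), L x (u r))) \<le> (Kf + KL) * Mf * h"
      by (simp add: algebra_simps)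
  qed
  obtain \<kappa> where "\<kappa> \<in> FL U f L x"
    "norm ((1 / (t + h - t)) *\<^sub>R (z (t + h) - x, I) - \<kappa>) \<le> (Kf + KL) * Mf * h"
    using integral_mean_near_convex[OF velocity _ compact_imp_closed[OF FL_compact] FL_convex near] h
    by auto
  thus ?thesis using that[OF rest] by simp
qed

subsection \<open>Backward step: prepending an arc with constant control\<close>

definition arc :: "'m \<Rightarrow> real \<Rightarrow> real \<Rightarrow> 'n \<Rightarrow> (real \<Rightarrow> 'n) \<Rightarrow> bool" where
  "arc u0 a t x w \<longleftrightarrow> continuous_on {a..t} w \<and>
     (\<forall>\<sigma>\<in>{a..t}. ((\<lambda>r. f (w r) u0) has_integral (x - w \<sigma>)) {\<sigma>..t})"

lemma arc_exists:
  assumes "u0 \<in> U" "a \<le> t" "(t - a) * Kf < 1"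
  obtains w where "arc u0 a t x w"
  using backward_ode[OF f_lipschitz_on[OF assms(1)] f_bound[OF assms(1)] assms(2,3)]
  unfolding arc_def by blast

lemma arc_displacement:
  assumes w: "arc u0 a t x w" and u0: "u0 \<in> U" and r: "r \<in> {a..t}"
  shows "norm (w r - x) \<le> Mf * (t - a)"
proof -
  have "((\<lambda>r. f (w r) u0) has_integral (x - w r)) {r..t}" using w r by (auto simp: arc_def)
  hence "norm (x - w r) \<le> Mf * (t - r)"
    by (rule has_integral_bound_interval[OF constants_nonneg(3)]) (use r f_bound[OF u0] in auto)
  also have "\<dots> \<le> Mf * (t - a)" using r constants_nonneg(3) by (intro mult_left_mono) auto
  finally show ?thesis by (simp add: norm_minus_commute)
qed

lemma arc_increment:
  assumes w: "arc u0 a t x w" and u0: "u0 \<in> U" and at: "a \<le> t"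
  shows "norm ((x - w a) - (t - a) *\<^sub>R f x u0) \<le> Kf * Mf * (t - a)\<^sup>2"
proof -
  have "norm ((x - w a) - (t - a) *\<^sub>R f x u0) \<le> (Kf * (Mf * (t - a))) * (t - a)"
  proof (rule has_integral_near_constant)
    show "((\<lambda>r. f (w r) u0) has_integral (x - w a)) {a..t}" using w at by (auto simp: arc_def)
    show "norm (f (w r) u0 - f x u0) \<le> Kf * (Mf * (t - a))" if "r \<in> {a..t}" for r
      using f_lip[OF u0, of "w r" x] mult_left_mono[OF arc_displacement[OF w u0 that] constants_nonneg(1)]
      by linarith
  qed (use at constants_nonneg in auto)
  thus ?thesis by (simp add: power2_eq_square mult.assoc)
qed

lemma arc_cost:
  assumes w: "arc u0 a t x w" and u0: "u0 \<in> U" and at: "a \<le> t"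
  shows "norm (integral {a..t} (\<lambda>r. L (w r) u0) - (t - a) *\<^sub>R L x u0) \<le> KL * Mf * (t - a)\<^sup>2"
proof -
  have "norm (integral {a..t} (\<lambda>r. L (w r) u0) - (t - a) *\<^sub>R L x u0) \<le> (KL * (Mf * (t - a))) * (t - a)"
  proof (rule has_integral_near_constant)
    show "((\<lambda>r. L (w r) u0) has_integral integral {a..t} (\<lambda>r. L (w r) u0)) {a..t}"
      using w by (intro integrable_integral integrable_continuous_interval
          continuous_on_compose2[OF L_continuous_on[OF u0, of UNIV]]) (auto simp: arc_def)
    show "norm (L (w r) u0 - L x u0) \<le> KL * (Mf * (t - a))" if "r \<in> {a..t}" for r
      using L_lip[OF u0, of "w r" x] mult_left_mono[OF arc_displacement[OF w u0 that] constants_nonneg(2)]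
      by linarith
  qed (use at constants_nonneg in auto)
  thus ?thesis by (simp add: power2_eq_square mult.assoc)
qed

lemma arc_end:
  assumes "arc u0 a t x w" "a \<le> t" shows "w t = x"
proof -
  have "((\<lambda>r. f (w r) u0) has_integral (x - w t)) {t..t}"
    using assms unfolding arc_def by (meson atLeastAtMost_iff order_refl)
  thus ?thesis using has_integral_point by force
qed

lemma arc_integral:
  assumes w: "arc u0 a t x w" and \<sigma>: "\<sigma> \<in> {a..t}"
  shows "((\<lambda>r. f (w r) u0) has_integral (w \<sigma> - w a)) {a..\<sigma>}"
proof -
  have whole: "((\<lambda>r. f (w r) u0) has_integral (x - w a)) {a..t}"
    and tail: "((\<lambda>r. f (w r) u0) has_integral (x - w \<sigma>)) {\<sigma>..t}"
    using w \<sigma> by (auto simp: arc_def)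
  have "(\<lambda>r. f (w r) u0) integrable_on {a..\<sigma>}"
    using \<sigma> by (intro integrable_subinterval_real[OF has_integral_integrable[OF whole]]) auto
  hence head: "((\<lambda>r. f (w r) u0) has_integral integral {a..\<sigma>} (\<lambda>r. f (w r) u0)) {a..\<sigma>}"
    by (rule integrable_integral)
  have "integral {a..\<sigma>} (\<lambda>r. f (w r) u0) + (x - w \<sigma>) = x - w a"
    using has_integral_unique[OF has_integral_combine[OF _ _ head tail] whole] \<sigma> by auto
  hence "integral {a..\<sigma>} (\<lambda>r. f (w r) u0) = w \<sigma> - w a" by (simp add: algebra_simps)
  thus ?thesis using head by simp
qed

lemma Y_prepend_arc:
  assumes J: "J \<in> Y t x" and w: "arc u0 a t x w" and u0: "u0 \<in> U"
    and at: "a \<le> t" "t \<le> T"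
  shows "J + integral {a..t} (\<lambda>r. L (w r) u0) \<in> Y a (w a)"
proof -
  obtain u z where u: "u \<in> controls T U" and z: "is_traj T f t x u z"
    and cost: "((\<lambda>r. L (z r) (u r)) has_integral J) {t..T}"
    using J unfolding Yset_def by blast
  define u' where "u' = (\<lambda>r. if r \<in> {a..<t} then u0 else u r)"
  define z' where "z' = (\<lambda>r. if r < t then w r else z r)"
  have on_arc: "((\<lambda>r. f (z' r) (u' r)) has_integral (w \<sigma> - w a)) {a..\<sigma>}" if "\<sigma> \<in> {a..t}" for \<sigma>
    by (rule has_integral_spike_finite[of "{t}", OF _ _ arc_integral[OF w that]])
       (use that in \<open>auto simp: z'_def u'_def\<close>)
  have traj: "is_traj T f a (w a) u' z'"
    unfolding is_traj_def
  proof
    fix \<sigma> assume \<sigma>: "\<sigma> \<in> {a..T}"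
    show "((\<lambda>r. f (z' r) (u' r)) has_integral (z' \<sigma> - w a)) {a..\<sigma>}"
    proof (cases "\<sigma> < t")
      case True
      thus ?thesis using on_arc[of \<sigma>] \<sigma> by (simp add: z'_def)
    next
      case False
      have "((\<lambda>r. f (z r) (u r)) has_integral (z \<sigma> - x)) {t..\<sigma>}"
        using z \<sigma> False by (auto simp: is_traj_def)
      hence "((\<lambda>r. f (z' r) (u' r)) has_integral (z \<sigma> - x)) {t..\<sigma>}"
        by (rule has_integral_spike_finite[of "{}", rotated 2]) (auto simp: z'_def u'_def)
      moreover have "((\<lambda>r. f (z' r) (u' r)) has_integral (x - w a)) {a..t}"
        using on_arc[of t] arc_end[OF w] at by simp
      ultimately have "((\<lambda>r. f (z' r) (u' r)) has_integral ((x - w a) + (z \<sigma> - x))) {a..\<sigma>}"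
        using False at by (intro has_integral_combine[of a t \<sigma>]) auto
      thus ?thesis using False by (simp add: z'_def)
    qed
  qed
  have "((\<lambda>r. L (w r) u0) has_integral integral {a..t} (\<lambda>r. L (w r) u0)) {a..t}"
    using w by (intro integrable_integral integrable_continuous_interval
        continuous_on_compose2[OF L_continuous_on[OF u0, of UNIV]]) (auto simp: arc_def)
  hence "((\<lambda>r. L (z' r) (u' r)) has_integral integral {a..t} (\<lambda>r. L (w r) u0)) {a..t}"
    by (rule has_integral_spike_finite[of "{t}", rotated 2]) (auto simp: z'_def u'_def)
  moreover have "((\<lambda>r. L (z' r) (u' r)) has_integral J) {t..T}"
    by (rule has_integral_spike_finite[of "{}", OF _ _ cost]) (auto simp: z'_def u'_def)
  ultimately have "((\<lambda>r. L (z' r) (u' r)) has_integral (integral {a..t} (\<lambda>r. L (w r) u0) + J)) {a..T}"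
    by (rule has_integral_combine[OF at])
  moreover have "u' \<in> controls T U" unfolding u'_def by (rule controls_prepend[OF u u0])
  ultimately show ?thesis unfolding Yset_def using traj by (auto simp: add.commute)
qed

lemma backward_step:
  assumes J: "J \<in> Y t x" and u0: "u0 \<in> U" and s: "0 \<le> s" "t \<le> T" "s * Kf < 1"
  obtains x' c where "J + c \<in> Y (t - s) x'" "norm (x' - x) \<le> Mf * s"
    "norm ((x - x') - s *\<^sub>R f x u0) \<le> Kf * Mf * s\<^sup>2" "norm (c - s *\<^sub>R L x u0) \<le> KL * Mf * s\<^sup>2"
proof -
  obtain w where w: "arc u0 (t - s) t x w" using arc_exists[OF u0, of "t - s" t] s by auto
  show ?thesis
  proof (rule that)
    show "J + integral {t - s..t} (\<lambda>r. L (w r) u0) \<in> Y (t - s) (w (t - s))"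
      using Y_prepend_arc[OF J w u0] s by auto
    show "norm (w (t - s) - x) \<le> Mf * s" using arc_displacement[OF w u0, of "t - s"] s by auto
    show "norm ((x - w (t - s)) - s *\<^sub>R f x u0) \<le> Kf * Mf * s\<^sup>2"
      using arc_increment[OF w u0] s by simp
    show "norm (integral {t - s..t} (\<lambda>r. L (w r) u0) - s *\<^sub>R L x u0) \<le> KL * Mf * s\<^sup>2"
      using arc_cost[OF w u0] s by simp
  qed
qed

lemma backward_steps:
  assumes J: "J \<in> Y t x" and tT: "t \<le> T" and S: "finite S" "S \<subseteq> U"
    and \<mu>: "\<And>u. u \<in> S \<Longrightarrow> 0 \<le> \<mu> u" and h: "0 \<le> h"
    and small: "\<And>u. u \<in> S \<Longrightarrow> h * \<mu> u * Kf < 1"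
  shows "\<exists>x' c. J + c \<in> Y (t - h * sum \<mu> S) x'
     \<and> norm (x' - x) \<le> Mf * (h * sum \<mu> S)
     \<and> norm ((x - x') - h *\<^sub>R (\<Sum>u\<in>S. \<mu> u *\<^sub>R f x u)) \<le> Kf * Mf * (h * sum \<mu> S)\<^sup>2
     \<and> norm (c - h *\<^sub>R (\<Sum>u\<in>S. \<mu> u *\<^sub>R L x u)) \<le> KL * Mf * (h * sum \<mu> S)\<^sup>2"
  using S \<mu> small
proof (induction S rule: finite_induct)
  case empty
  show ?case using J by (intro exI[of _ x] exI[of _ 0]) simp
next
  case (insert v S)
  define \<sigma> where "\<sigma> = h * sum \<mu> S"
  define s where "s = h * \<mu> v"
  have v: "v \<in> U" using insert by auto
  have s0: "0 \<le> s" using insert h by (simp add: s_def)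
  have \<sigma>0: "0 \<le> \<sigma>" unfolding \<sigma>_def using insert h by (intro mult_nonneg_nonneg sum_nonneg) auto
  have tT': "t - \<sigma> \<le> T" using tT \<sigma>0 by simp
  have short: "s * Kf < 1" using insert.prems(3)[of v] by (simp add: s_def)
  have total: "h * sum \<mu> (insert v S) = \<sigma> + s"
    using insert by (simp add: \<sigma>_def s_def algebra_simps)
  obtain x1 c1 where Y1: "J + c1 \<in> Y (t - \<sigma>) x1" and d1: "norm (x1 - x) \<le> Mf * \<sigma>"
    and e1: "norm ((x - x1) - h *\<^sub>R (\<Sum>u\<in>S. \<mu> u *\<^sub>R f x u)) \<le> Kf * Mf * \<sigma>\<^sup>2"
    and c1: "norm (c1 - h *\<^sub>R (\<Sum>u\<in>S. \<mu> u *\<^sub>R L x u)) \<le> KL * Mf * \<sigma>\<^sup>2"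
    using insert unfolding \<sigma>_def by auto
  obtain x2 c2 where Y2: "(J + c1) + c2 \<in> Y (t - \<sigma> - s) x2" and d2: "norm (x2 - x1) \<le> Mf * s"
    and e2: "norm ((x1 - x2) - s *\<^sub>R f x1 v) \<le> Kf * Mf * s\<^sup>2"
    and c2: "norm (c2 - s *\<^sub>R L x1 v) \<le> KL * Mf * s\<^sup>2"
    using backward_step[OF Y1 v s0 tT' short] by blast
  have split: "h *\<^sub>R (\<Sum>u\<in>insert v S. \<mu> u *\<^sub>R g u) = h *\<^sub>R (\<Sum>u\<in>S. \<mu> u *\<^sub>R g u) + s *\<^sub>R g v"
    for g :: "'m \<Rightarrow> 'b::real_vector"
    using insert by (simp add: s_def scaleR_add_right)
  have "norm (f x1 v - f x v) \<le> Kf * (Mf * \<sigma>)"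
    using f_lip[OF v, of x1 x] mult_left_mono[OF d1 constants_nonneg(1)] by linarith
  hence "norm ((x - x1) + (x1 - x2) - (h *\<^sub>R (\<Sum>u\<in>S. \<mu> u *\<^sub>R f x u) + s *\<^sub>R f x v))
      \<le> Kf * Mf * (\<sigma> + s)\<^sup>2"
    using two_step_error[OF e1 e2 _ s0 \<sigma>0] constants_nonneg by (simp add: mult.assoc)
  hence ex: "norm ((x - x2) - h *\<^sub>R (\<Sum>u\<in>insert v S. \<mu> u *\<^sub>R f x u)) \<le> Kf * Mf * (\<sigma> + s)\<^sup>2"
    unfolding split by simp
  have "norm (L x1 v - L x v) \<le> KL * (Mf * \<sigma>)"
    using L_lip[OF v, of x1 x] mult_left_mono[OF d1 constants_nonneg(2)] by linarith
  hence "norm (c1 + c2 - (h *\<^sub>R (\<Sum>u\<in>S. \<mu> u *\<^sub>R L x u) + s *\<^sub>R L x v))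
      \<le> KL * Mf * (\<sigma> + s)\<^sup>2"
    using two_step_error[OF c1 c2 _ s0 \<sigma>0] constants_nonneg by (simp add: mult.assoc)
  hence ec: "norm ((c1 + c2) - h *\<^sub>R (\<Sum>u\<in>insert v S. \<mu> u *\<^sub>R L x u)) \<le> KL * Mf * (\<sigma> + s)\<^sup>2"
    unfolding split .
  have dx: "norm (x2 - x) \<le> Mf * (\<sigma> + s)"
    using norm_triangle_ineq[of "x2 - x1" "x1 - x"] d1 d2 by (simp add: algebra_simps)
  have "J + (c1 + c2) \<in> Y (t - (\<sigma> + s)) x2" using Y2 by (simp add: add.assoc diff_diff_eq)
  thus ?case unfolding total using ex ec dx by blast
qed

text \<open>Every \<open>c\<close> in the convex hull of the velocities is realised backwards over a time \<open>h\<close>: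
  split \<open>h\<close> according to the convex weights of \<open>c\<close>.\<close>
lemma backward_convex_step:
  assumes J: "J \<in> Y t x" and tT: "t \<le> T" and c: "c \<in> convex hull {(f x u, L x u) | u. u \<in> U}"
    and h: "0 \<le> h" "h * Kf < 1"
  obtains x' c' where "J + c' \<in> Y (t - h) x'"
    "norm ((x - x') - h *\<^sub>R fst c) \<le> Kf * Mf * h\<^sup>2" "norm (c' - h *\<^sub>R snd c) \<le> KL * Mf * h\<^sup>2"
proof -
  have hull: "c \<in> convex hull ((\<lambda>u. (f x u, L x u)) ` U)" using c by (simp add: setcompr_eq_image)
  obtain S \<mu> where S: "finite S" "S \<subseteq> U" and \<mu>: "\<And>u. u \<in> S \<Longrightarrow> 0 \<le> \<mu> u" "sum \<mu> S = 1"
    and c_eq: "(\<Sum>u\<in>S. \<mu> u *\<^sub>R (f x u, L x u)) = c"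
    using convex_hull_image_explicit[OF hull] by blast
  have c_parts: "fst c = (\<Sum>u\<in>S. \<mu> u *\<^sub>R f x u)" "snd c = (\<Sum>u\<in>S. \<mu> u *\<^sub>R L x u)"
    using c_eq by (auto simp: fst_sum snd_sum)
  have small: "h * \<mu> u * Kf < 1" if "u \<in> S" for u
  proof -
    have "\<mu> u \<le> 1" using member_le_sum[of u S \<mu>] that \<mu> S(1) by auto
    hence "\<mu> u * Kf \<le> 1 * Kf" by (rule mult_right_mono[OF _ constants_nonneg(1)])
    hence "h * (\<mu> u * Kf) \<le> h * Kf" using h(1) by (simp add: mult_left_mono)
    thus ?thesis using h(2) by (simp add: mult.assoc)
  qed
  show ?thesis
    using backward_steps[where \<mu>=\<mu> and h=h, OF J tT S \<mu>(1) h(1) small] \<mu>(2) that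
    unfolding c_parts by auto
qed

end

text \<open>The ordering cone \<open>P\<close> is closed, convex, pointed and contains \<open>0\<close>.\<close>
locale moc_cone = moc T U f L Kf Mf KL BL
  for T :: real and U :: "'m::euclidean_space set"
    and f :: "'n::euclidean_space \<Rightarrow> 'm \<Rightarrow> 'n"
    and L :: "'n \<Rightarrow> 'm \<Rightarrow> 'p::euclidean_space"
    and Kf Mf KL BL :: real +
  fixes P :: "'p set"
  assumes P_closed: "closed P" and P_convex: "convex P" and P_cone: "cone P" and P_zero: "0 \<in> P"
    and P_pointed: "P \<inter> uminus ` P = {0}"
begin

abbreviation "V \<equiv> Vmap T U f L P"

abbreviation "G \<equiv> graph_on T (upper V P)"

lemma V_subset: "V t x \<subseteq> closure (Y t x)"
  unfolding Vmap_def eff_def by auto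

text \<open>Every reachable cost (and limit of such) dominates an efficient one, so it lies in
  \<open>V\<^sub>\<up>\<close>; this is how the approximating points are shown to lie on the graph.\<close>
lemma closure_Y_in_graph:
  assumes "0 \<le> t" "t \<le> T" "y \<in> closure (Y t x)"
  shows "((t, x), y) \<in> G"
proof -
  obtain m where "m \<in> V t x" "y - m \<in> P"
    using efficient_point_below[OF P_closed P_convex P_cone P_zero P_pointed
        Y_closure_compact[OF assms(1,2)] assms(3)]
    unfolding Vmap_def by blast
  hence "y \<in> upper V P t x" unfolding upper_def by force
  thus ?thesis using assms unfolding graph_on_def by simp
qed

lemma V_final: "V T x = {0}"
  unfolding Vmap_def Y_final eff_def using P_zero by (auto intro: image_eqI[of _ _ 0])

lemma V_extremal: "extremal_element_map T V P"
  unfolding extremal_element_map_def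
proof (intro ballI allI conjI)
  fix t x y assume y: "y \<in> V t x"
  have y_eff: "(\<lambda>q. y - q) ` P \<inter> closure (Y t x) = {y}" using y unfolding Vmap_def eff_def by auto
  show "V t x \<inter> (\<lambda>q. y - q) ` P = {y}"
    using y_eff V_subset[of t x] y P_zero by (auto intro: image_eqI[of _ _ 0])
  show "V t x \<inter> (\<lambda>q. y + q) ` P = {y}"
  proof
    show "{y} \<subseteq> V t x \<inter> (\<lambda>q. y + q) ` P" using y P_zero by (auto intro: image_eqI[of _ _ 0])
    show "V t x \<inter> (\<lambda>q. y + q) ` P \<subseteq> {y}"
    proof
      fix y' assume "y' \<in> V t x \<inter> (\<lambda>q. y + q) ` P"
      then obtain q where q: "q \<in> P" "y' = y + q" "y' \<in> V t x" by auto
      have "(\<lambda>q. y' - q) ` P \<inter> closure (Y t x) = {y'}" using q(3) unfolding Vmap_def eff_def by auto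
      moreover have "y \<in> (\<lambda>q. y' - q) ` P \<inter> closure (Y t x)"
        using q V_subset[of t x] y by (auto intro: image_eqI[of _ _ q])
      ultimately show "y' \<in> {y}" by auto
    qed
  qed
qed

subsection \<open>Condition (i): a forward contingent direction\<close>

lemma forward_rate:
  assumes t: "0 \<le> t" and y: "y \<in> closure (Y t x)" and h: "0 < h" "t + h \<le> T"
  shows "\<exists>\<kappa>\<in>FL U f L x. \<exists>v. norm (v - ((1, fst \<kappa>), - snd \<kappa>)) \<le> (2 * (Kf + KL) * Mf + 1) * h
           \<and> ((t, x), y) + h *\<^sub>R v \<in> G"
proof -
  obtain J where J: "J \<in> Y t x" "norm (J - y) < h\<^sup>2"
    using y h unfolding closure_approachable by (metis dist_norm zero_less_power)
  obtain x' J' \<kappa> where J': "J' \<in> Y (t + h) x'" and \<kappa>: "\<kappa> \<in> FL U f L x"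
    and mean: "norm ((1 / h) *\<^sub>R (x' - x, J - J') - \<kappa>) \<le> (Kf + KL) * Mf * h"
    using forward_step[OF J(1) t h] .
  define v where "v = ((1::real, (1 / h) *\<^sub>R (x' - x)), (1 / h) *\<^sub>R (J' - y))"
  have "((t, x), y) + h *\<^sub>R v = ((t + h, x'), J')" using h by (simp add: v_def algebra_simps)
  moreover have "((t + h, x'), J') \<in> G"
    using closure_Y_in_graph[where t="t + h" and x=x' and y=J'] J' closure_subset t h by auto
  ultimately have on_graph: "((t, x), y) + h *\<^sub>R v \<in> G" by simp
  have mean': "norm ((1 / h) *\<^sub>R (x' - x) - fst \<kappa>, (1 / h) *\<^sub>R (J - J') - snd \<kappa>)
      \<le> (Kf + KL) * Mf * h"
    using mean by (cases \<kappa>) simp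
  have state_err: "norm ((1 / h) *\<^sub>R (x' - x) - fst \<kappa>) \<le> (Kf + KL) * Mf * h"
    by (rule order_trans[OF norm_fst_le mean'])
  have mean_cost: "norm ((1 / h) *\<^sub>R (J - J') - snd \<kappa>) \<le> (Kf + KL) * Mf * h"
    by (rule order_trans[OF norm_snd_le mean'])
  have approx: "norm ((1 / h) *\<^sub>R (J - y)) \<le> h"
    using J(2) h by (simp add: power2_eq_square divide_simps)
  have split: "(1 / h) *\<^sub>R (J' - y) - - snd \<kappa> = (1 / h) *\<^sub>R (J - y) - ((1 / h) *\<^sub>R (J - J') - snd \<kappa>)"
    by (simp add: algebra_simps)
  have cost_err: "norm ((1 / h) *\<^sub>R (J' - y) - - snd \<kappa>) \<le> (Kf + KL) * Mf * h + h"
    unfolding split using norm_triangle_ineq4[of "(1 / h) *\<^sub>R (J - y)" "(1 / h) *\<^sub>R (J - J') - snd \<kappa>"]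
      mean_cost approx by linarith
  have "norm (v - ((1, fst \<kappa>), - snd \<kappa>))
      \<le> norm ((1 / h) *\<^sub>R (x' - x) - fst \<kappa>) + norm ((1 / h) *\<^sub>R (J' - y) - - snd \<kappa>)"
    unfolding v_def by (rule norm_direction_diff)
  moreover have "(Kf + KL) * Mf * h + ((Kf + KL) * Mf * h + h) = (2 * (Kf + KL) * Mf + 1) * h"
    by (simp add: algebra_simps)
  ultimately have "norm (v - ((1, fst \<kappa>), - snd \<kappa>)) \<le> (2 * (Kf + KL) * Mf + 1) * h"
    using state_err cost_err by linarith
  thus ?thesis using \<kappa> on_graph by blast
qed

lemma condition_forward:
  assumes t: "0 \<le> t" "t < T" and y: "y \<in> V t x"
  shows "\<exists>(fb, Lb)\<in>FL U f L x. - Lb \<in> cont_deriv T (upper V P) (t, x) y (1, fb)"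
proof -
  have "\<exists>\<kappa>\<in>FL U f L x. ((1, fst \<kappa>), - snd \<kappa>) \<in> contingent_cone G ((t, x), y)"
  proof (rule contingent_cone_selection[OF FL_compact _ _ forward_rate, where \<delta>="T - t"])
    show "continuous_on (FL U f L x) (\<lambda>\<kappa>. ((1::real, fst \<kappa>), - snd \<kappa>))"
      by (intro continuous_intros)
  qed (use t y V_subset in auto)
  thus ?thesis unfolding cont_deriv_def by auto
qed

subsection \<open>Condition (ii): every backward direction is contingent\<close>

lemma backward_rate_hull:
  assumes t: "t \<le> T" and y: "y \<in> closure (Y t x)"
    and c: "c \<in> convex hull {(f x u, L x u) | u. u \<in> U}"
    and h: "0 < h" "h \<le> t" "h * Kf < 1"
  shows "\<exists>v. norm (v - ((-1, - fst c), snd c)) \<le> ((Kf + KL) * Mf + 1) * h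
           \<and> ((t, x), y) + h *\<^sub>R v \<in> G"
proof -
  obtain J where J: "J \<in> Y t x" "norm (J - y) < h\<^sup>2"
    using y h unfolding closure_approachable by (metis dist_norm zero_less_power)
  obtain x' c' where Y': "J + c' \<in> Y (t - h) x'"
    and state: "norm ((x - x') - h *\<^sub>R fst c) \<le> Kf * Mf * h\<^sup>2"
    and cost: "norm (c' - h *\<^sub>R snd c) \<le> KL * Mf * h\<^sup>2"
    using backward_convex_step[OF J(1) t c less_imp_le[OF h(1)] h(3)] by blast
  define v where "v = ((-1::real, (1 / h) *\<^sub>R (x' - x)), (1 / h) *\<^sub>R (J + c' - y))"
  have "((t, x), y) + h *\<^sub>R v = ((t - h, x'), J + c')" using h by (simp add: v_def algebra_simps)
  moreover have "((t - h, x'), J + c') \<in> G"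
    using closure_Y_in_graph[where t="t - h" and x=x' and y="J + c'"] Y' closure_subset t h by auto
  ultimately have on_graph: "((t, x), y) + h *\<^sub>R v \<in> G" by simp
  have "(1 / h) *\<^sub>R (x' - x) - - fst c = - ((1 / h) *\<^sub>R ((x - x') - h *\<^sub>R fst c))"
    using h by (simp add: algebra_simps)
  hence state_err: "norm ((1 / h) *\<^sub>R (x' - x) - - fst c) \<le> Kf * Mf * h"
    using state h by (simp add: power2_eq_square divide_simps mult.assoc)
  have split: "(1 / h) *\<^sub>R (J + c' - y) - snd c = (1 / h) *\<^sub>R (c' - h *\<^sub>R snd c) + (1 / h) *\<^sub>R (J - y)"
    using h by (simp add: algebra_simps)
  have "norm ((1 / h) *\<^sub>R (c' - h *\<^sub>R snd c)) \<le> KL * Mf * h"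
    using cost h by (simp add: power2_eq_square divide_simps mult.assoc)
  moreover have "norm ((1 / h) *\<^sub>R (J - y)) \<le> h"
    using J(2) h by (simp add: power2_eq_square divide_simps)
  ultimately have cost_err: "norm ((1 / h) *\<^sub>R (J + c' - y) - snd c) \<le> KL * Mf * h + h"
    unfolding split using norm_triangle_ineq by (smt (verit))
  have "norm (v - ((-1, - fst c), snd c))
      \<le> norm ((1 / h) *\<^sub>R (x' - x) - - fst c) + norm ((1 / h) *\<^sub>R (J + c' - y) - snd c)"
    unfolding v_def by (rule norm_direction_diff)
  moreover have "Kf * Mf * h + (KL * Mf * h + h) = ((Kf + KL) * Mf + 1) * h"
    by (simp add: algebra_simps)
  ultimately have "norm (v - ((-1, - fst c), snd c)) \<le> ((Kf + KL) * Mf + 1) * h"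
    using state_err cost_err by linarith
  thus ?thesis using on_graph by blast
qed

text \<open>The same for \<open>c \<in> FL(x)\<close>, by approximation from the convex hull.\<close>
lemma backward_rate:
  assumes t: "t \<le> T" and y: "y \<in> closure (Y t x)" and c: "c \<in> FL U f L x"
    and h: "0 < h" "h \<le> t" "h * Kf < 1"
  shows "\<exists>v. norm (v - ((-1, - fst c), snd c)) \<le> ((Kf + KL) * Mf + 3) * h
           \<and> ((t, x), y) + h *\<^sub>R v \<in> G"
proof -
  have "\<exists>c'\<in>convex hull {(f x u, L x u) | u. u \<in> U}. dist c' c \<le> h"
    using c h(1) unfolding FL_def closure_approachable_le by blast
  then obtain c' where c': "c' \<in> convex hull {(f x u, L x u) | u. u \<in> U}" "norm (c' - c) \<le> h"
    by (auto simp: dist_norm)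
  obtain v where v: "norm (v - ((-1, - fst c'), snd c')) \<le> ((Kf + KL) * Mf + 1) * h"
    and on_graph: "((t, x), y) + h *\<^sub>R v \<in> G"
    using backward_rate_hull[OF t y c'(1) h] by blast
  have "norm (fst c' - fst c, snd c' - snd c) \<le> h" using c'(2) by (cases c, cases c') simp
  hence "norm (fst c' - fst c) \<le> h" "norm (snd c' - snd c) \<le> h"
    using norm_fst_le norm_snd_le order_trans by blast+
  hence "norm (- fst c' - - fst c) \<le> h" "norm (snd c' - snd c) \<le> h"
    by (simp_all add: norm_minus_commute)
  moreover have "norm (((-1::real, - fst c'), snd c') - ((-1, - fst c), snd c))
      \<le> norm (- fst c' - - fst c) + norm (snd c' - snd c)"
    by (rule norm_direction_diff)
  ultimately have "norm (((-1::real, - fst c'), snd c') - ((-1, - fst c), snd c)) \<le> h + h"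
    by linarith
  hence "norm (v - ((-1, - fst c), snd c)) \<le> ((Kf + KL) * Mf + 1) * h + (h + h)"
    by (rule norm_diff_triangle_le[OF v])
  also have "\<dots> = ((Kf + KL) * Mf + 3) * h" by (simp add: algebra_simps)
  finally have "norm (v - ((-1, - fst c), snd c)) \<le> ((Kf + KL) * Mf + 3) * h" .
  thus ?thesis using on_graph by blast
qed

lemma condition_backward:
  assumes t: "0 < t" "t \<le> T" and y: "y \<in> V t x" and c: "(fb, Lb) \<in> FL U f L x"
  shows "Lb \<in> cont_deriv T (upper V P) (t, x) y (-1, - fb)"
proof -
  have yc: "y \<in> closure (Y t x)" using y V_subset by blast
  define \<delta> where "\<delta> = min t (1 / (Kf + 1))"
  have \<delta>: "0 < \<delta>" using t constants_nonneg(1) by (simp add: \<delta>_def)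
  have "((-1, - fb), Lb) \<in> contingent_cone G ((t, x), y)"
  proof (rule contingent_coneI_rate[OF \<delta>])
    fix h assume h: "0 < h" "h \<le> \<delta>"
    have "h \<le> 1 / (Kf + 1)" using h(2) by (simp add: \<delta>_def)
    hence "h * Kf \<le> 1 / (Kf + 1) * Kf" by (rule mult_right_mono[OF _ constants_nonneg(1)])
    also have "\<dots> < 1" using constants_nonneg(1) by (simp add: field_simps)
    finally have "h * Kf < 1" .
    moreover have "h \<le> t" using h(2) by (simp add: \<delta>_def)
    ultimately show "\<exists>w. norm (w - ((-1, - fb), Lb)) \<le> ((Kf + KL) * Mf + 3) * h
        \<and> ((t, x), y) + h *\<^sub>R w \<in> G"
      using backward_rate[OF t(2) yc c h(1)] by simp
  qed
  thus ?thesis unfolding cont_deriv_def by simp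
qed

theorem V_gen_contingent_solution: "gen_contingent_solution T U f L P V"
  unfolding gen_contingent_solution_def
  using V_extremal condition_forward condition_backward V_final by fastforce

end

text \<open>Proposition 7.1.\<close>
theorem proposition7p1:
  fixes T :: real and U :: "(real^'m) set"
    and f :: "real^'n \<Rightarrow> real^'m \<Rightarrow> real^'n"
    and L :: "real^'n \<Rightarrow> real^'m \<Rightarrow> real^'p"
    and P :: "(real^'p) set"
    and Kf Mf KL BL :: real
  assumes "T > 0"
    and "U \<noteq> {}" and "compact U"
    and "continuous_on (UNIV \<times> U) (\<lambda>(x, u). f x u)"
    and "\<And>x1 x2 u. u \<in> U \<Longrightarrow> norm (f x1 u - f x2 u) \<le> Kf * norm (x1 - x2)"
    and "\<And>x u. u \<in> U \<Longrightarrow> norm (f x u) \<le> Mf"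
    and "continuous_on (UNIV \<times> U) (\<lambda>(x, u). L x u)"
    and "\<And>x u. u \<in> U \<Longrightarrow> norm (L x u) \<le> BL"
    and "\<And>x1 x2 u. u \<in> U \<Longrightarrow> norm (L x1 u - L x2 u) \<le> KL * norm (x1 - x2)"
    and "closed P" and "convex P" and "cone P" and "0 \<in> P"
    and "P \<inter> uminus ` P = {0}"
    and "interior P \<noteq> {}"
  shows "gen_contingent_solution T U f L P (Vmap T U f L P)"
proof -
  interpret moc_cone T U f L Kf Mf KL BL P
    by unfold_locales (use assms in auto)
  show ?thesis by (rule V_gen_contingent_solution)
qed

end
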